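(* Let $\mathcal I\subseteq\mathbb R$, let $q:\mathcal I\to(0,\infty)$ be a target FDR curve, and for each $i\in[m]$ let $X_i\in\mathcal X_i$ be a test statistic and $p_i:\mathcal X_i\times\mathcal I\to[0,1]$ a p-value function. Assume $X_1,\dots,X_m$ are independent and that $p_i(X_i;c)$ is a valid p-value for $H_{i,c}:\theta_i\ge c$ for all $i\in[m]$, $c\in\mathcal I$. Define $P_{i,\sup}=\sup_{c\in\mathcal I}p_i(X_i;c)/q(c)$, and let $\mathcal S^T$ be the output of the iteration $\mathcal S^1=[m]$, $\mathcal S^{t+1}=\{i\in\mathcal S^t:P_{i,\sup}\le|\mathcal S^t|/m\}$, stopped at the first $T$ with $\mathcal S^{T+1}=\mathcal S^T$ (equivalently, the Benjamini–Hochberg procedure at level 1 applied to $P_{1,\sup},\dots,P_{m,\sup}$). Then $$\sup_{c\in\mathcal I}\frac{\mathrm{FDR}(c)}{q(c)}\le\mathbb E\left[\sup_{c\in\mathcal I}\frac{\sum_{i=1}^m\mathbf 1_{\{H_{i,c}\text{ true}\}}\mathbf 1_{\{i\in\mathcal S^T\}}}{q(c)(1\vee|\mathcal S^T|)}\right]\le1.$$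
   Context: $\theta_1,\dots,\theta_m$ are unknown real parameters. A p-value $P$ is valid for $H_{i,c}$ if $\mathbb P(P\le u)\le u$ for all $u\in[0,1]$ whenever $H_{i,c}$ is true. For $c\in\mathcal I$, $\mathrm{FDR}(c)=\mathbb E\big[\sum_{i=1}^m\mathbf 1_{\{H_{i,c}\text{ true}\}}\mathbf 1_{\{i\in\mathcal S^T\}}/(1\vee|\mathcal S^T|)\big]$. *)

theory Defs
  imports "HOL-Probability.Probability"
begin

text \<open>Hypotheses are indexed by 0,...,m-1 (instead of 1,...,m).\<close>

text \<open>P_{i,sup} = sup over c in I of p_i(x;c)/q(c), extended-real valued
  (it may be +infinity when q is not bounded away from 0).\<close>
definition Psup :: "real set \<Rightarrow> (real \<Rightarrow> real) \<Rightarrow> ('b \<Rightarrow> real \<Rightarrow> real) \<Rightarrow> 'b \<Rightarrow> ereal" where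
  "Psup I q f x = (SUP c\<in>I. ereal (f x c / q c))"

definition bh_step :: "nat \<Rightarrow> (nat \<Rightarrow> ereal) \<Rightarrow> nat set \<Rightarrow> nat set" where
  "bh_step m P S = {i\<in>S. P i \<le> ereal (real (card S) / real m)}"

text \<open>bh_seq m P t is S^{t+1}; S^1 = [m].\<close>
definition bh_seq :: "nat \<Rightarrow> (nat \<Rightarrow> ereal) \<Rightarrow> nat \<Rightarrow> nat set" where
  "bh_seq m P t = (bh_step m P ^^ t) {..<m}"

definition bh_out :: "nat \<Rightarrow> (nat \<Rightarrow> ereal) \<Rightarrow> nat set" where
  "bh_out m P = bh_seq m P (LEAST t. bh_seq m P (Suc t) = bh_seq m P t)"

definition fdp :: "(nat \<Rightarrow> real) \<Rightarrow> nat \<Rightarrow> nat set \<Rightarrow> real \<Rightarrow> real" where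
  "fdp \<theta> m S c = (\<Sum>i<m. (if c \<le> \<theta> i \<and> i \<in> S then 1 else 0)) / max 1 (real (card S))"

end

theory Submission
  imports Defs
begin

(* The leave-one-out argument for Benjamini-Hochberg, run on the supremum p-values P_i.
   For every c, FDP(c)/q(c) is at most sum_i w_i [i in S]/max 1 |S| with
   w_i = sup {1/q(c) | c in I, c <= theta_i}, so it suffices that w_i E([i in S]/max 1 |S|) <= 1/m.
   If i is selected, then lowering P_i to -infinity leaves the output S unchanged, hence
   [i in S]/max 1 |S| <= [P_i <= K_i/m]/max 1 K_i, where K_i is the output size with P_i = -infinity.
   K_i depends only on the other statistics and is therefore independent of P_i, while validity at
   each c <= theta_i gives w_i P(P_i <= t) <= t. Conditioning on K_i = k bounds the expectation by
   sum_k P(K_i = k) (k/m)/max 1 k <= 1/m. The first inequality is sup E <= E sup. *)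

lemma bh_seq_0 [simp]: "bh_seq m P 0 = {..<m}"
  by (simp add: bh_seq_def)

lemma bh_seq_Suc: "bh_seq m P (Suc t) = bh_step m P (bh_seq m P t)"
  by (simp add: bh_seq_def)

lemma bh_seq_Suc_subset: "bh_seq m P (Suc t) \<subseteq> bh_seq m P t"
  by (auto simp: bh_seq_Suc bh_step_def)

lemma bh_seq_antimono: "s \<le> t \<Longrightarrow> bh_seq m P t \<subseteq> bh_seq m P s"
proof (induction t rule: dec_induct)
  case (step t)
  then show ?case
    using bh_seq_Suc_subset[of m P t] by blast
qed simp

lemma bh_seq_subset_lessThan: "bh_seq m P t \<subseteq> {..<m}"
  using bh_seq_antimono[of 0 t] by simp

lemma finite_bh_seq [simp]: "finite (bh_seq m P t)"
  using bh_seq_subset_lessThan by (rule finite_subset) simp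

lemma bh_seq_stable:
  assumes "bh_seq m P (Suc t) = bh_seq m P t" and "t \<le> s"
  shows "bh_seq m P s = bh_seq m P t"
  using assms(2)
  by (induction s rule: dec_induct) (simp_all add: bh_seq_Suc assms(1)[unfolded bh_seq_Suc])

lemma ex_bh_seq_stable: "\<exists>t\<le>m. bh_seq m P (Suc t) = bh_seq m P t"
proof (rule ccontr)
  assume unstable: "\<not> ?thesis"
  have "card (bh_seq m P t) + t \<le> m" if "t \<le> Suc m" for t
    using that
  proof (induction t)
    case (Suc t)
    have "bh_seq m P (Suc t) \<subset> bh_seq m P t"
      using Suc.prems unstable bh_seq_Suc_subset[of m P t] by auto
    then have "card (bh_seq m P (Suc t)) < card (bh_seq m P t)"
      by (simp add: psubset_card_mono)
    with Suc show ?case by simp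
  qed (simp add: card_mono[OF _ bh_seq_subset_lessThan])
  from this[of "Suc m"] show False by simp
qed

lemma
  shows bh_out_eq_bh_seq: "bh_out m P = bh_seq m P m"
    and bh_seq_stable_at_m: "bh_seq m P (Suc m) = bh_seq m P m"
proof -
  let ?stable = "\<lambda>t. bh_seq m P (Suc t) = bh_seq m P t"
  let ?T = "LEAST t. ?stable t"
  obtain t where "t \<le> m" "?stable t"
    using ex_bh_seq_stable by blast
  have "?T \<le> t"
    using \<open>?stable t\<close> by (rule Least_le)
  with \<open>t \<le> m\<close> have T_le: "?T \<le> m"
    by simp
  have T_stable: "?stable ?T"
    using \<open>?stable t\<close> by (rule LeastI)
  show "bh_out m P = bh_seq m P m"
    unfolding bh_out_def using bh_seq_stable[OF T_stable T_le] by simp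
  show "bh_seq m P (Suc m) = bh_seq m P m"
    using bh_seq_stable[OF T_stable, of "Suc m"] bh_seq_stable[OF T_stable T_le] T_le by simp
qed

lemma bh_step_bh_out: "bh_step m P (bh_out m P) = bh_out m P"
  using bh_seq_stable_at_m by (simp add: bh_out_eq_bh_seq bh_seq_Suc)

lemma bh_out_le:
  assumes "i \<in> bh_out m P"
  shows "P i \<le> ereal (real (card (bh_out m P)) / real m)"
  using assms bh_step_bh_out[of m P] unfolding bh_step_def by blast

lemma bh_seq_cong: "(\<And>j. j < m \<Longrightarrow> P j = P' j) \<Longrightarrow> bh_seq m P t = bh_seq m P' t"
proof (induction t)
  case (Suc t)
  then show ?case
    using bh_seq_subset_lessThan[of m P t] by (auto simp: bh_seq_Suc bh_step_def)
qed simp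

lemma bh_out_cong: "(\<And>j. j < m \<Longrightarrow> P j = P' j) \<Longrightarrow> bh_out m P = bh_out m P'"
  unfolding bh_out_eq_bh_seq by (rule bh_seq_cong)

lemma bh_out_leave_one_out:
  assumes "i \<in> bh_out m P"
  shows "bh_out m (P(i := -\<infinity>)) = bh_out m P"
proof -
  have "bh_seq m (P(i := -\<infinity>)) t = bh_seq m P t" if "t \<le> m" for t
    using that
  proof (induction t)
    case (Suc t)
    have "i \<in> bh_seq m P (Suc t)"
      using assms bh_seq_antimono[OF Suc.prems, of m P] by (auto simp: bh_out_eq_bh_seq)
    then show ?case
      using Suc by (auto simp: bh_seq_Suc bh_step_def)
  qed simp
  then show ?thesis
    by (simp add: bh_out_eq_bh_seq)
qed

lemma bh_out_share_le_leave_one_out: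
  fixes P :: "nat \<Rightarrow> ereal" and i m :: nat
  defines "S' \<equiv> bh_out m (P(i := -\<infinity>))"
  shows "of_bool (i \<in> bh_out m P) / max 1 (real (card (bh_out m P)))
    \<le> of_bool (P i \<le> ereal (real (card S') / real m)) / max 1 (real (card S'))"
proof (cases "i \<in> bh_out m P")
  case True
  then show ?thesis
    using bh_out_le[OF True] unfolding S'_def bh_out_leave_one_out[OF True] by simp
qed simp

lemma borel_measurable_card:
  fixes S :: "'a \<Rightarrow> nat set"
  assumes "\<And>x. S x \<subseteq> {..<m}" and "\<And>j. j < m \<Longrightarrow> Measurable.pred L (\<lambda>x. j \<in> S x)"
  shows "(\<lambda>x. real (card (S x))) \<in> borel_measurable L"
proof -
  have "real (card (S x)) = (\<Sum>j<m. if j \<in> S x then 1 else 0)" for x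
    using assms(1)[of x] by (simp add: Int_absorb1 flip: of_bool_def)
  moreover have "(\<lambda>x. \<Sum>j<m. if j \<in> S x then 1 else 0 :: real) \<in> borel_measurable L"
    using assms(2) by (intro borel_measurable_sum measurable_If) (auto simp: pred_def)
  ultimately show ?thesis
    by simp
qed

lemma pred_mem_bh_seq:
  assumes "\<And>j. j < m \<Longrightarrow> (\<lambda>x. P x j) \<in> borel_measurable L"
  shows "Measurable.pred L (\<lambda>x. j \<in> bh_seq m (P x) t)"
proof (induction t arbitrary: j)
  case (Suc t)
  show ?case
  proof (cases "j < m")
    case True
    have "(\<lambda>x. real (card (bh_seq m (P x) t))) \<in> borel_measurable L"
      using bh_seq_subset_lessThan Suc by (rule borel_measurable_card)
    then show ?thesis
      using Suc assms[OF True] unfolding bh_seq_Suc bh_step_def by measurable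
  next
    case False
    then have "(\<lambda>x. j \<in> bh_seq m (P x) (Suc t)) = (\<lambda>x. False)"
      using bh_seq_subset_lessThan by blast
    then show ?thesis
      by simp
  qed
qed simp

lemma pred_mem_bh_out:
  assumes "\<And>j. j < m \<Longrightarrow> (\<lambda>x. P x j) \<in> borel_measurable L"
  shows "Measurable.pred L (\<lambda>x. j \<in> bh_out m (P x))"
  unfolding bh_out_eq_bh_seq using assms by (rule pred_mem_bh_seq)

lemma borel_measurable_card_bh_out:
  assumes "\<And>j. j < m \<Longrightarrow> (\<lambda>x. P x j) \<in> borel_measurable L"
  shows "(\<lambda>x. real (card (bh_out m (P x)))) \<in> borel_measurable L"
proof (rule borel_measurable_card[where m = m])
  show "bh_out m (P x) \<subseteq> {..<m}" for x
    by (simp add: bh_out_eq_bh_seq bh_seq_subset_lessThan)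
  show "Measurable.pred L (\<lambda>x. j \<in> bh_out m (P x))" for j
    using assms by (rule pred_mem_bh_out)
qed

lemma borel_measurable_fdp_bh_out:
  assumes "\<And>j. j < m \<Longrightarrow> (\<lambda>x. P x j) \<in> borel_measurable L"
  shows "(\<lambda>x. fdp \<theta> m (bh_out m (P x)) c) \<in> borel_measurable L"
  unfolding fdp_def using pred_mem_bh_out[of m P L, OF assms] borel_measurable_card_bh_out[of m P L, OF assms]
  by (intro borel_measurable_divide borel_measurable_sum measurable_If) (auto simp: pred_def)

lemma fdp_nonneg: "0 \<le> fdp \<theta> m S c"
  unfolding fdp_def by (intro divide_nonneg_pos sum_nonneg) auto

lemma fdp_le_1:
  assumes "finite S"
  shows "fdp \<theta> m S c \<le> 1"
proof -
  have "(\<Sum>i<m. if c \<le> \<theta> i \<and> i \<in> S then 1 else 0) \<le> (\<Sum>i<m. of_bool (i \<in> S) :: real)"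
    by (intro sum_mono) auto
  also have "\<dots> \<le> real (card S)"
    using assms by (simp add: card_mono)
  finally show ?thesis
    unfolding fdp_def by simp
qed

lemma SUP_fdp_div_le:
  assumes q_pos: "\<And>c. c \<in> I \<Longrightarrow> q c > 0"
  shows "(SUP c\<in>I. ennreal (fdp \<theta> m S c / q c))
    \<le> (\<Sum>i<m. ennreal (of_bool (i \<in> S) / max 1 (real (card S)))
          * (SUP c\<in>{c\<in>I. c \<le> \<theta> i}. ennreal (1 / q c)))"
proof (rule SUP_least)
  fix c assume c: "c \<in> I"
  have "fdp \<theta> m S c / q c
      = (\<Sum>i<m. of_bool (c \<le> \<theta> i) * (of_bool (i \<in> S) / max 1 (real (card S))) * (1 / q c))"
    unfolding fdp_def sum_divide_distrib by (intro sum.cong) auto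
  then have "ennreal (fdp \<theta> m S c / q c)
      = (\<Sum>i<m. ennreal (of_bool (c \<le> \<theta> i) * (of_bool (i \<in> S) / max 1 (real (card S))) * (1 / q c)))"
    using q_pos[OF c] by (simp add: sum_ennreal)
  also have "\<dots> \<le> (\<Sum>i<m. ennreal (of_bool (i \<in> S) / max 1 (real (card S)))
      * (SUP c\<in>{c\<in>I. c \<le> \<theta> i}. ennreal (1 / q c)))"
  proof (intro sum_mono)
    fix i
    define a where "a = of_bool (i \<in> S) / max 1 (real (card S))"
    have "0 \<le> a"
      unfolding a_def by simp
    show "ennreal (of_bool (c \<le> \<theta> i) * a * (1 / q c))
      \<le> ennreal a * (SUP c\<in>{c\<in>I. c \<le> \<theta> i}. ennreal (1 / q c))"
    proof (cases "c \<le> \<theta> i")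
      case True
      have "ennreal (of_bool (c \<le> \<theta> i) * a * (1 / q c)) = ennreal a * ennreal (1 / q c)"
        using True \<open>0 \<le> a\<close> q_pos[OF c] by (simp add: ennreal_mult[symmetric])
      also have "\<dots> \<le> ennreal a * (SUP c\<in>{c\<in>I. c \<le> \<theta> i}. ennreal (1 / q c))"
        using c True by (intro mult_left_mono SUP_upper) auto
      finally show ?thesis .
    qed simp
  qed
  finally show "ennreal (fdp \<theta> m S c / q c) \<le> \<dots>" .
qed

lemma SUP_integral_le_nn_integral_SUP:
  fixes f :: "'i \<Rightarrow> 'a \<Rightarrow> real"
  assumes "\<And>c. c \<in> I \<Longrightarrow> integrable M (f c)" and "\<And>c x. c \<in> I \<Longrightarrow> x \<in> space M \<Longrightarrow> 0 \<le> f c x"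
  shows "(SUP c\<in>I. ennreal (integral\<^sup>L M (f c))) \<le> (\<integral>\<^sup>+x. (SUP c\<in>I. ennreal (f c x)) \<partial>M)"
proof (rule SUP_least)
  fix c assume "c \<in> I"
  then have "ennreal (integral\<^sup>L M (f c)) = (\<integral>\<^sup>+x. ennreal (f c x) \<partial>M)"
    using assms by (intro nn_integral_eq_integral[symmetric]) auto
  also have "\<dots> \<le> (\<integral>\<^sup>+x. (SUP c\<in>I. ennreal (f c x)) \<partial>M)"
    using \<open>c \<in> I\<close> by (intro nn_integral_mono SUP_upper)
  finally show "ennreal (integral\<^sup>L M (f c)) \<le> \<dots>" .
qed

lemma (in prob_space) indep_var_component_rest:
  fixes f :: "'b \<Rightarrow> 'c::topological_space" and g :: "('i \<Rightarrow> 'b) \<Rightarrow> 'c"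
  assumes indep: "indep_vars N X I" and "i \<in> I"
    and f: "f \<in> borel_measurable (N i)" and g: "g \<in> borel_measurable (Pi\<^sub>M (I - {i}) N)"
  shows "indep_var borel (\<lambda>\<omega>. f (X i \<omega>)) borel (\<lambda>\<omega>. g (restrict (\<lambda>j. X j \<omega>) (I - {i})))"
proof -
  have "indep_var borel ((\<lambda>y. f (y i)) \<circ> (\<lambda>\<omega>. restrict (\<lambda>j. X j \<omega>) {i}))
      borel (g \<circ> (\<lambda>\<omega>. restrict (\<lambda>j. X j \<omega>) (I - {i})))"
    using \<open>i \<in> I\<close> f g
    by (intro indep_var_compose[OF indep_var_restrict[OF indep]] measurable_compose[OF measurable_component_singleton]) auto
  then show ?thesis
    by (simp add: comp_def)
qed

lemma (in prob_space) Psup_tail_bound: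
  fixes Y :: "'a \<Rightarrow> 'b" and f :: "'b \<Rightarrow> real \<Rightarrow> real"
  assumes "J \<subseteq> I" and q_pos: "\<And>c. c \<in> J \<Longrightarrow> q c > 0"
    and meas: "\<And>c. c \<in> J \<Longrightarrow> (\<lambda>\<omega>. f (Y \<omega>) c) \<in> borel_measurable M"
    and valid: "\<And>c u. c \<in> J \<Longrightarrow> u \<in> {0..1} \<Longrightarrow> prob {\<omega>\<in>space M. f (Y \<omega>) c \<le> u} \<le> u"
    and "0 \<le> t"
  shows "(SUP c\<in>J. ennreal (1 / q c)) * emeasure M {\<omega>\<in>space M. Psup I q f (Y \<omega>) \<le> ereal t} \<le> ennreal t"
  unfolding SUP_mult_right_ennreal
proof (rule SUP_least)
  fix c assume "c \<in> J"
  let ?A = "{\<omega>\<in>space M. Psup I q f (Y \<omega>) \<le> ereal t}"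
  let ?C = "{\<omega>\<in>space M. f (Y \<omega>) c \<le> q c * t}"
  have qc: "q c > 0"
    using q_pos[OF \<open>c \<in> J\<close>] .
  have "?A \<subseteq> ?C"
  proof safe
    fix \<omega> assume "Psup I q f (Y \<omega>) \<le> ereal t"
    have "ereal (f (Y \<omega>) c / q c) \<le> Psup I q f (Y \<omega>)"
      unfolding Psup_def using \<open>c \<in> J\<close> \<open>J \<subseteq> I\<close> by (intro SUP_upper) auto
    also note \<open>Psup I q f (Y \<omega>) \<le> ereal t\<close>
    finally show "f (Y \<omega>) c \<le> q c * t"
      using qc by (simp add: divide_le_eq mult.commute)
  qed
  then have "prob ?A \<le> prob ?C"
    using meas[OF \<open>c \<in> J\<close>] by (intro finite_measure_mono) measurable
  also have "prob ?C \<le> q c * t"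
  proof (cases "q c * t \<le> 1")
    case True
    then show ?thesis
      using valid[OF \<open>c \<in> J\<close>, of "q c * t"] qc \<open>0 \<le> t\<close> by simp
  next
    case False
    then show ?thesis
      using prob_le_1[of ?C] by linarith
  qed
  finally show "ennreal (1 / q c) * emeasure M ?A \<le> ennreal t"
    using qc by (simp add: emeasure_eq_measure ennreal_mult[symmetric] pos_divide_le_eq ennreal_leI mult.commute)
qed

lemma (in prob_space) nn_integral_indep_threshold_eq:
  fixes U :: "'a \<Rightarrow> ereal" and K :: "'a \<Rightarrow> nat"
  assumes indep: "indep_var borel U borel (\<lambda>\<omega>. ereal (real (K \<omega>)))"
    and K_le: "\<And>\<omega>. \<omega> \<in> space M \<Longrightarrow> K \<omega> \<le> m"
  shows "(\<integral>\<^sup>+\<omega>. ennreal (of_bool (U \<omega> \<le> ereal (real (K \<omega>) / real m)) / max 1 (real (K \<omega>))) \<partial>M)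
    = (\<Sum>k\<le>m. ennreal (1 / max 1 (real k)) * emeasure M {\<omega>\<in>space M. K \<omega> = k}
        * emeasure M {\<omega>\<in>space M. U \<omega> \<le> ereal (real k / real m)})"
proof -
  define A where "A k = {\<omega>\<in>space M. U \<omega> \<le> ereal (real k / real m)}" for k
  define B where "B k = {\<omega>\<in>space M. K \<omega> = k}" for k
  have U: "U \<in> borel_measurable M" and K: "(\<lambda>\<omega>. ereal (real (K \<omega>))) \<in> borel_measurable M"
    using indep_var_rv1[OF indep] indep_var_rv2[OF indep] by simp_all
  have sets: "A k \<in> sets M" "B k \<in> sets M" for k
  proof -
    have "A k = U -` {..ereal (real k / real m)} \<inter> space M"
      "B k = (\<lambda>\<omega>. ereal (real (K \<omega>))) -` {ereal (real k)} \<inter> space M"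
      by (auto simp: A_def B_def)
    then show "A k \<in> sets M" "B k \<in> sets M"
      using U K by (auto intro: measurable_sets)
  qed
  have indep_AB: "emeasure M (A k \<inter> B k) = emeasure M (B k) * emeasure M (A k)" for k
  proof -
    have "A k \<inter> B k
        = {\<omega>\<in>space M. U \<omega> \<in> {..ereal (real k / real m)} \<and> ereal (real (K \<omega>)) \<in> {ereal (real k)}}"
      "A k = {\<omega>\<in>space M. U \<omega> \<in> {..ereal (real k / real m)}}"
      "B k = {\<omega>\<in>space M. ereal (real (K \<omega>)) \<in> {ereal (real k)}}"
      by (auto simp: A_def B_def)
    then have "prob (A k \<inter> B k) = prob (A k) * prob (B k)"
      by (simp only:) (rule prob_indep_random_variable[OF indep]; simp)
    then show ?thesis
      by (simp add: emeasure_eq_measure ennreal_mult mult.commute)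
  qed
  have integrand: "ennreal (of_bool (U \<omega> \<le> ereal (real (K \<omega>) / real m)) / max 1 (real (K \<omega>)))
      = (\<Sum>k\<le>m. ennreal (1 / max 1 (real k)) * indicator (A k \<inter> B k) \<omega>)" if "\<omega> \<in> space M" for \<omega>
  proof -
    have "(\<Sum>k\<le>m. ennreal (1 / max 1 (real k)) * indicator (A k \<inter> B k) \<omega>)
        = (\<Sum>k\<le>m. if k = K \<omega> then ennreal (1 / max 1 (real k)) * indicator (A k) \<omega> else 0)"
      using that by (intro sum.cong) (auto simp: B_def indicator_def)
    also have "\<dots> = ennreal (1 / max 1 (real (K \<omega>))) * indicator (A (K \<omega>)) \<omega>"
      using K_le[OF that] by simp
    finally show ?thesis
      using that by (simp add: A_def indicator_def)
  qed
  have "(\<integral>\<^sup>+\<omega>. ennreal (of_bool (U \<omega> \<le> ereal (real (K \<omega>) / real m)) / max 1 (real (K \<omega>))) \<partial>M)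
      = (\<integral>\<^sup>+\<omega>. (\<Sum>k\<le>m. ennreal (1 / max 1 (real k)) * indicator (A k \<inter> B k) \<omega>) \<partial>M)"
    by (rule nn_integral_cong) (simp add: integrand)
  also have "\<dots> = (\<Sum>k\<le>m. ennreal (1 / max 1 (real k)) * emeasure M (A k \<inter> B k))"
    using sets by (subst nn_integral_sum) (auto intro!: sum.cong nn_integral_cmult_indicator)
  also have "\<dots> = (\<Sum>k\<le>m. ennreal (1 / max 1 (real k)) * emeasure M (B k) * emeasure M (A k))"
    by (simp add: indep_AB mult.assoc)
  finally show ?thesis
    by (simp only: A_def B_def)
qed

lemma (in prob_space) nn_integral_indep_threshold_le:
  fixes U :: "'a \<Rightarrow> ereal" and K :: "'a \<Rightarrow> nat"
  assumes indep: "indep_var borel U borel (\<lambda>\<omega>. ereal (real (K \<omega>)))"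
    and K_le: "\<And>\<omega>. \<omega> \<in> space M \<Longrightarrow> K \<omega> \<le> m"
    and U_tail: "\<And>k. k \<le> m \<Longrightarrow>
      w * emeasure M {\<omega>\<in>space M. U \<omega> \<le> ereal (real k / real m)} \<le> ennreal (real k / real m)"
  shows "w * (\<integral>\<^sup>+\<omega>. ennreal (of_bool (U \<omega> \<le> ereal (real (K \<omega>) / real m)) / max 1 (real (K \<omega>))) \<partial>M)
    \<le> ennreal (1 / real m)"
proof -
  let ?B = "\<lambda>k. {\<omega>\<in>space M. K \<omega> = k}"
  have B_sets: "?B k \<in> sets M" for k
  proof -
    have "?B k = (\<lambda>\<omega>. ereal (real (K \<omega>))) -` {ereal (real k)} \<inter> space M"
      by auto
    then show ?thesis
      using indep_var_rv2[OF indep] by (auto intro: measurable_sets)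
  qed
  have "w * (\<integral>\<^sup>+\<omega>. ennreal (of_bool (U \<omega> \<le> ereal (real (K \<omega>) / real m)) / max 1 (real (K \<omega>))) \<partial>M)
      = (\<Sum>k\<le>m. ennreal (1 / max 1 (real k)) * emeasure M (?B k)
          * (w * emeasure M {\<omega>\<in>space M. U \<omega> \<le> ereal (real k / real m)}))"
    using K_le by (simp add: nn_integral_indep_threshold_eq[OF indep] sum_distrib_left mult_ac)
  also have "\<dots> \<le> (\<Sum>k\<le>m. ennreal (1 / max 1 (real k)) * emeasure M (?B k) * ennreal (real k / real m))"
    using U_tail by (intro sum_mono mult_left_mono) auto
  also have "\<dots> \<le> (\<Sum>k\<le>m. ennreal (1 / real m) * emeasure M (?B k))"
  proof (intro sum_mono)
    fix k
    have "1 / max 1 (real k) * (real k / real m) = (real k / max 1 (real k)) / real m"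
      by simp
    also have "\<dots> \<le> 1 / real m"
      by (intro divide_right_mono) simp_all
    finally have "ennreal (1 / max 1 (real k)) * ennreal (real k / real m) \<le> ennreal (1 / real m)"
      by (simp add: ennreal_mult[symmetric] ennreal_leI del: ennreal_mult)
    then have "ennreal (1 / max 1 (real k)) * ennreal (real k / real m) * emeasure M (?B k)
        \<le> ennreal (1 / real m) * emeasure M (?B k)"
      by (rule mult_right_mono) simp
    then show "ennreal (1 / max 1 (real k)) * emeasure M (?B k) * ennreal (real k / real m)
        \<le> ennreal (1 / real m) * emeasure M (?B k)"
      by (simp only: mult_ac)
  qed
  also have "\<dots> = ennreal (1 / real m) * emeasure M (\<Union>k\<le>m. ?B k)"
    unfolding sum_distrib_left[symmetric] using B_sets
    by (subst sum_emeasure) (auto simp: disjoint_family_on_def)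
  also have "\<dots> \<le> ennreal (1 / real m)"
    using mult_left_mono[OF emeasure_le_1, of "ennreal (1 / real m)"] by simp
  finally show ?thesis .
qed

locale fdr_curve_experiment = prob_space M
  for M :: "'a measure" and N :: "nat \<Rightarrow> 'b measure" and X :: "nat \<Rightarrow> 'a \<Rightarrow> 'b"
    and p :: "nat \<Rightarrow> 'b \<Rightarrow> real \<Rightarrow> real" and q :: "real \<Rightarrow> real"
    and \<theta> :: "nat \<Rightarrow> real" and I :: "real set" and m :: nat +
  assumes q_pos: "\<forall>c\<in>I. q c > 0"
    and X_meas: "\<forall>i<m. X i \<in> measurable M (N i)"
    and indep: "indep_vars N X {..<m}"
    and p_meas: "\<forall>i<m. \<forall>c\<in>I. (\<lambda>x. p i x c) \<in> borel_measurable (N i)"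
    and valid: "\<forall>i<m. \<forall>c\<in>I. c \<le> \<theta> i \<longrightarrow>
                  (\<forall>u\<in>{0..1}. measure M {\<omega>\<in>space M. p i (X i \<omega>) c \<le> u} \<le> u)"
    and Psup_meas: "\<forall>i<m. Psup I q (p i) \<in> borel_measurable (N i)"
begin

abbreviation Psup_vec :: "'a \<Rightarrow> nat \<Rightarrow> ereal" where
  "Psup_vec \<omega> \<equiv> \<lambda>j. Psup I q (p j) (X j \<omega>)"

abbreviation null_weight :: "nat \<Rightarrow> ennreal" where
  "null_weight i \<equiv> SUP c\<in>{c\<in>I. c \<le> \<theta> i}. ennreal (1 / q c)"

abbreviation selection_share :: "nat \<Rightarrow> 'a \<Rightarrow> real" where
  "selection_share i \<omega> \<equiv>
    of_bool (i \<in> bh_out m (Psup_vec \<omega>)) / max 1 (real (card (bh_out m (Psup_vec \<omega>))))"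

(* A hypothesis with P_i = -infinity survives every step, so this is the size of the output when i
   is rejected by fiat; it is a function of the statistics X_j with j \<noteq> i only. *)
abbreviation leave_one_out_size :: "nat \<Rightarrow> 'a \<Rightarrow> nat" where
  "leave_one_out_size i \<omega> \<equiv> card (bh_out m ((Psup_vec \<omega>)(i := -\<infinity>)))"

lemma borel_measurable_Psup_vec: "j < m \<Longrightarrow> (\<lambda>\<omega>. Psup_vec \<omega> j) \<in> borel_measurable M"
  using X_meas Psup_meas by (auto intro: measurable_compose)

lemma borel_measurable_selection_share: "selection_share i \<in> borel_measurable M"
  using pred_mem_bh_out[of m Psup_vec M i, OF borel_measurable_Psup_vec]
    borel_measurable_card_bh_out[of m Psup_vec M, OF borel_measurable_Psup_vec]
  by (intro borel_measurable_divide measurable_If borel_measurable_max) (auto simp: pred_def)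

lemma indep_Psup_leave_one_out_size:
  assumes "i < m"
  shows "indep_var borel (\<lambda>\<omega>. Psup_vec \<omega> i) borel (\<lambda>\<omega>. ereal (real (leave_one_out_size i \<omega>)))"
proof -
  define g where "g y = ereal (real (card (bh_out m (\<lambda>j. if j = i then -\<infinity> else Psup I q (p j) (y j)))))"
    for y :: "nat \<Rightarrow> 'b"
  have "g \<in> borel_measurable (Pi\<^sub>M ({..<m} - {i}) N)"
    unfolding g_def
  proof (intro borel_measurable_ereal borel_measurable_card_bh_out)
    fix j assume "j < m"
    then show "(\<lambda>y. if j = i then -\<infinity> else Psup I q (p j) (y j))
        \<in> borel_measurable (Pi\<^sub>M ({..<m} - {i}) N)"
      using Psup_meas by (cases "j = i") (auto intro: measurable_compose[OF measurable_component_singleton])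
  qed
  then have "indep_var borel (\<lambda>\<omega>. Psup_vec \<omega> i)
      borel (\<lambda>\<omega>. g (restrict (\<lambda>j. X j \<omega>) ({..<m} - {i})))"
    using assms Psup_meas by (intro indep_var_component_rest[OF indep]) auto
  moreover have "g (restrict (\<lambda>j. X j \<omega>) ({..<m} - {i})) = ereal (real (leave_one_out_size i \<omega>))" for \<omega>
    unfolding g_def by (intro arg_cong[where f = "\<lambda>S. ereal (real (card S))"] bh_out_cong) auto
  ultimately show ?thesis
    by simp
qed

lemma nn_integral_selection_share_le:
  assumes "i < m"
  shows "null_weight i * (\<integral>\<^sup>+\<omega>. selection_share i \<omega> \<partial>M) \<le> ennreal (1 / real m)"
proof -
  let ?K = "leave_one_out_size i"
  have "(\<integral>\<^sup>+\<omega>. selection_share i \<omega> \<partial>M)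
      \<le> (\<integral>\<^sup>+\<omega>. ennreal (of_bool (Psup_vec \<omega> i \<le> ereal (real (?K \<omega>) / real m)) / max 1 (real (?K \<omega>))) \<partial>M)"
    by (intro nn_integral_mono ennreal_leI bh_out_share_le_leave_one_out)
  then have "null_weight i * (\<integral>\<^sup>+\<omega>. selection_share i \<omega> \<partial>M)
      \<le> null_weight i *
        (\<integral>\<^sup>+\<omega>. ennreal (of_bool (Psup_vec \<omega> i \<le> ereal (real (?K \<omega>) / real m)) / max 1 (real (?K \<omega>))) \<partial>M)"
    by (rule mult_left_mono) simp
  also have "\<dots> \<le> ennreal (1 / real m)"
  proof (rule nn_integral_indep_threshold_le[OF indep_Psup_leave_one_out_size[OF assms]])
    show "?K \<omega> \<le> m" for \<omega>
      using card_mono[OF _ bh_seq_subset_lessThan] by (simp add: bh_out_eq_bh_seq)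
    show "null_weight i * emeasure M {\<omega>\<in>space M. Psup_vec \<omega> i \<le> ereal (real k / real m)}
        \<le> ennreal (real k / real m)" for k
      using assms q_pos X_meas p_meas valid by (intro Psup_tail_bound) (auto intro: measurable_compose)
  qed
  finally show ?thesis .
qed

lemma nn_integral_SUP_fdp_le_1:
  "(\<integral>\<^sup>+\<omega>. (SUP c\<in>I. ennreal (fdp \<theta> m (bh_out m (Psup_vec \<omega>)) c / q c)) \<partial>M) \<le> 1"
proof -
  have "(\<integral>\<^sup>+\<omega>. (SUP c\<in>I. ennreal (fdp \<theta> m (bh_out m (Psup_vec \<omega>)) c / q c)) \<partial>M)
      \<le> (\<integral>\<^sup>+\<omega>. (\<Sum>i<m. ennreal (selection_share i \<omega>) * null_weight i) \<partial>M)"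
    using q_pos by (intro nn_integral_mono SUP_fdp_div_le) auto
  also have "\<dots> = (\<Sum>i<m. null_weight i * (\<integral>\<^sup>+\<omega>. selection_share i \<omega> \<partial>M))"
    using borel_measurable_selection_share
    by (subst nn_integral_sum) (auto simp: mult.commute intro!: sum.cong nn_integral_cmult)
  also have "\<dots> \<le> (\<Sum>i<m. ennreal (1 / real m))"
    using nn_integral_selection_share_le by (intro sum_mono) simp
  also have "\<dots> \<le> 1"
    by (cases "m = 0") (simp_all add: ennreal_of_nat_eq_real_of_nat flip: ennreal_mult')
  finally show ?thesis .
qed

lemma SUP_FDR_le_nn_integral_SUP:
  "(SUP c\<in>I. ennreal ((\<integral>\<omega>. fdp \<theta> m (bh_out m (Psup_vec \<omega>)) c \<partial>M) / q c))
    \<le> (\<integral>\<^sup>+\<omega>. (SUP c\<in>I. ennreal (fdp \<theta> m (bh_out m (Psup_vec \<omega>)) c / q c)) \<partial>M)"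
proof -
  have "integrable M (\<lambda>\<omega>. fdp \<theta> m (bh_out m (Psup_vec \<omega>)) c / q c)" for c
    using borel_measurable_fdp_bh_out[of m Psup_vec M, OF borel_measurable_Psup_vec] fdp_nonneg fdp_le_1
    by (intro integrable_divide integrable_const_bound[where B = 1]) (auto simp: bh_out_eq_bh_seq)
  then have "(SUP c\<in>I. ennreal (\<integral>\<omega>. fdp \<theta> m (bh_out m (Psup_vec \<omega>)) c / q c \<partial>M))
      \<le> (\<integral>\<^sup>+\<omega>. (SUP c\<in>I. ennreal (fdp \<theta> m (bh_out m (Psup_vec \<omega>)) c / q c)) \<partial>M)"
    using q_pos fdp_nonneg by (intro SUP_integral_le_nn_integral_SUP) auto
  then show ?thesis
    by simp
qed

end

theorem proposition3:
  fixes M :: "'a measure" and N :: "nat \<Rightarrow> 'b measure" and X :: "nat \<Rightarrow> 'a \<Rightarrow> 'b"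
    and p :: "nat \<Rightarrow> 'b \<Rightarrow> real \<Rightarrow> real" and q :: "real \<Rightarrow> real"
    and \<theta> :: "nat \<Rightarrow> real" and I :: "real set" and m :: nat
  assumes M: "prob_space M"
    and q_pos: "\<forall>c\<in>I. q c > 0"
    and X_meas: "\<forall>i<m. X i \<in> measurable M (N i)"
    and indep: "prob_space.indep_vars M N X {..<m}"
    and p_range: "\<forall>i<m. \<forall>x\<in>space (N i). \<forall>c\<in>I. p i x c \<in> {0..1}"
    and p_meas: "\<forall>i<m. \<forall>c\<in>I. (\<lambda>x. p i x c) \<in> borel_measurable (N i)"
    and valid: "\<forall>i<m. \<forall>c\<in>I. c \<le> \<theta> i \<longrightarrow>
                  (\<forall>u\<in>{0..1}. measure M {\<omega>\<in>space M. p i (X i \<omega>) c \<le> u} \<le> u)"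
    and Psup_meas: "\<forall>i<m. Psup I q (p i) \<in> borel_measurable (N i)"
  shows "(SUP c\<in>I. ennreal ((\<integral>\<omega>. fdp \<theta> m (bh_out m (\<lambda>i. Psup I q (p i) (X i \<omega>))) c \<partial>M) / q c))
           \<le> (\<integral>\<^sup>+\<omega>. (SUP c\<in>I. ennreal (fdp \<theta> m (bh_out m (\<lambda>i. Psup I q (p i) (X i \<omega>))) c / q c)) \<partial>M)
       \<and> (\<integral>\<^sup>+\<omega>. (SUP c\<in>I. ennreal (fdp \<theta> m (bh_out m (\<lambda>i. Psup I q (p i) (X i \<omega>))) c / q c)) \<partial>M) \<le> 1"
proof -
  interpret fdr_curve_experiment M N X p q \<theta> I m
    using M q_pos X_meas indep p_meas valid Psup_meas
    by (simp add: fdr_curve_experiment_def fdr_curve_experiment_axioms_def)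
  show ?thesis
    using SUP_FDR_le_nn_integral_SUP nn_integral_SUP_fdp_le_1 by simp
qed

end
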